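(* There exists $T_0>0$ depending only on $\lambda$ and $\alpha$ such that for any solution $s(t)$ of $\dot s_1=s_1\psi(s_1^2+s_2^2)\log\lambda$, $\dot s_2=-s_2\psi(s_1^2+s_2^2)\log\lambda$ with $s(0)\in D_{r_0}$, every time interval during which $s(t)$ stays in $D_{r_0}\setminus D_{r_0/2}$ has length less than $T_0$.
   Context: Here $\lambda>1$ is the largest eigenvalue of $A=\begin{pmatrix}2&1\\1&1\end{pmatrix}$, $0<\alpha<1$, $0<r_0<1$, $D_r=\{(s_1,s_2):s_1^2+s_2^2\le r\}$, and $\psi:[0,1]\to[0,1]$ is $C^\infty$ except at $0$, with $\psi(u)=1$ for $u\ge r_0$, $\psi'>0$ and decreasing on $(0,r_0)$, and $\psi(u)=(u/r_0)^\alpha$ for $0\le u\le r_0/2$. *)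

theory Defs
  imports "HOL-Analysis.Analysis"
begin

definition matA :: "real^2^2" where
  "matA = vector [vector [2, 1], vector [1, 1]]"

definition lam :: real where
  "lam = (GREATEST l. \<exists>v::real^2. v \<noteq> 0 \<and> matA *v v = l *\<^sub>R v)"

text \<open>Closed disc D_r = {(s1,s2). s1^2 + s2^2 \<le> r} (as in the paper, r bounds the squared norm).\<close>
definition D :: "real \<Rightarrow> (real \<times> real) set" where
  "D r = {(s1, s2). s1\<^sup>2 + s2\<^sup>2 \<le> r}"

definition smooth_on :: "(real \<Rightarrow> real) \<Rightarrow> real set \<Rightarrow> bool" where
  "smooth_on f S \<longleftrightarrow> (\<forall>n. \<forall>x\<in>S. ((deriv ^^ n) f) differentiable (at x))"

definition admissible_psi :: "real \<Rightarrow> real \<Rightarrow> (real \<Rightarrow> real) \<Rightarrow> bool" where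
  "admissible_psi \<alpha> r0 \<psi> \<longleftrightarrow>
     (\<forall>u\<in>{0..1}. \<psi> u \<in> {0..1}) \<and>
     smooth_on \<psi> {0<..<1} \<and>
     (\<forall>u\<in>{r0..1}. \<psi> u = 1) \<and>
     (\<forall>u\<in>{0<..<r0}. deriv \<psi> u > 0) \<and>
     (\<forall>u\<in>{0<..<r0}. \<forall>v\<in>{0<..<r0}. u \<le> v \<longrightarrow> deriv \<psi> v \<le> deriv \<psi> u) \<and>
     (\<forall>u\<in>{0..r0/2}. \<psi> u = (u / r0) powr \<alpha>)"

end

theory Submission
  imports Defs
begin

text \<open>Write \<open>u = s1\<^sup>2 + s2\<^sup>2\<close>. Along a solution, \<open>s1\<^sup>2 - s2\<^sup>2\<close> has derivative
  \<open>2 \<psi>(u) u log \<lambda>\<close>. In the annulus \<open>r0/2 < u \<le> r0\<close> the monotone \<open>\<psi>\<close> is at least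
  \<open>\<psi>(r0/2) = 2 powr -\<alpha>\<close>, so this derivative is at least \<open>2 powr -\<alpha> r0 log \<lambda>\<close>,
  while \<open>|s1\<^sup>2 - s2\<^sup>2| \<le> u \<le> r0\<close>. Hence a stay in the annulus lasts at most
  \<open>2 powr (1 + \<alpha>) / log \<lambda>\<close>, independently of \<open>r0\<close> and \<open>\<psi>\<close>.\<close>

lemma matA_mult_vec:
  fixes w :: "real^2"
  shows "(matA *v w) $ 1 = 2 * w$1 + w$2" "(matA *v w) $ 2 = w$1 + w$2"
  unfolding matA_def by (simp_all add: matrix_vector_mult_def sum_2)

lemma matA_eigenvalue_root:
  fixes v :: "real^2"
  assumes "v \<noteq> 0" "matA *v v = l *\<^sub>R v"
  shows "l\<^sup>2 - 3 * l + 1 = 0"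
proof -
  have e1: "2 * v$1 + v$2 = l * v$1" and e2: "v$1 + v$2 = l * v$2"
    using assms(2) by (simp_all add: vec_eq_iff forall_2 matA_mult_vec)
  have v2: "v$2 = (l - 2) * v$1" using e1 by (simp add: algebra_simps)
  have "v$1 \<noteq> 0 \<or> v$2 \<noteq> 0" using assms(1) by (simp add: vec_eq_iff forall_2)
  then have "v$1 \<noteq> 0" using v2 by auto
  moreover have "v$1 * (l\<^sup>2 - 3 * l + 1) = 0"
    using e2 unfolding v2 by (simp add: algebra_simps power2_eq_square)
  ultimately show ?thesis by simp
qed

lemma matA_eigenvalue_le:
  fixes v :: "real^2"
  assumes "v \<noteq> 0" "matA *v v = l *\<^sub>R v"
  shows "l \<le> (3 + sqrt 5) / 2"
proof -
  have "(l - 3/2)\<^sup>2 = 5/4"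
    using matA_eigenvalue_root[OF assms] by (simp add: power2_eq_square algebra_simps)
  then have "\<bar>l - 3/2\<bar> = sqrt 5 / 2"
    by (metis real_sqrt_abs real_sqrt_divide real_sqrt_four)
  then have "l - 3/2 \<le> sqrt 5 / 2" by (metis abs_ge_self)
  then show ?thesis by (simp add: field_simps)
qed

lemma lam_eq: "lam = (3 + sqrt 5) / 2"
proof -
  let ?l = "(3 + sqrt 5) / 2"
  have "?l * (?l - 2) = ?l - 1" by (simp add: field_simps)
  then have "matA *v vector [1, ?l - 2] = ?l *\<^sub>R vector [1, ?l - 2]"
    by (simp add: vec_eq_iff forall_2 matA_mult_vec)
  moreover have "vector [1, ?l - 2] \<noteq> (0::real^2)"
    by (metis vector_2(1) zero_index zero_neq_one)
  ultimately have "\<exists>v::real^2. v \<noteq> 0 \<and> matA *v v = ?l *\<^sub>R v" by blast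
  then show ?thesis
    unfolding lam_def using matA_eigenvalue_le by (intro Greatest_equality) auto
qed

lemma ln_lam_pos: "0 < ln lam"
proof -
  have "0 \<le> sqrt (5::real)" by simp
  then have "1 < lam" unfolding lam_eq by (simp add: field_simps add_pos_nonneg)
  then show ?thesis by simp
qed

lemma admissible_psi_ge_on_annulus:
  assumes adm: "admissible_psi \<alpha> r0 \<psi>" and r0: "0 < r0" "r0 < 1" and "0 \<le> \<alpha>"
    and u: "r0/2 \<le> u" "u \<le> r0"
  shows "(1/2) powr \<alpha> \<le> \<psi> u"
proof (cases "u = r0")
  case True
  then have "\<psi> u = 1" using adm r0 unfolding admissible_psi_def by auto
  moreover have "(1/2::real) powr \<alpha> \<le> 1" using \<open>0 \<le> \<alpha>\<close> by (intro powr_le1) auto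
  ultimately show ?thesis by simp
next
  case False
  have "\<psi> (r0/2) \<le> \<psi> u"
  proof (rule DERIV_nonneg_imp_nondecreasing[OF u(1)])
    fix x assume "r0/2 \<le> x" "x \<le> u"
    then have x: "x \<in> {0<..<1}" "x \<in> {0<..<r0}" using r0 u False by auto
    then have "((deriv ^^ 0) \<psi>) differentiable (at x)"
      using adm unfolding admissible_psi_def smooth_on_def by blast
    then have "DERIV \<psi> x :> deriv \<psi> x" by (simp add: DERIV_deriv_iff_real_differentiable)
    moreover have "deriv \<psi> x > 0" using adm x unfolding admissible_psi_def by blast
    ultimately show "\<exists>y. DERIV \<psi> x :> y \<and> 0 \<le> y" by (auto intro: less_imp_le)
  qed
  moreover have "\<psi> (r0/2) = (r0/2/r0) powr \<alpha>" using adm r0 unfolding admissible_psi_def by auto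
  ultimately show ?thesis using r0 by simp
qed

lemma admissible_psi_annulus_rate:
  assumes "admissible_psi \<alpha> r0 \<psi>" "0 < r0" "r0 < 1" "0 \<le> \<alpha>" "r0/2 \<le> u" "u \<le> r0"
  shows "(1/2) powr \<alpha> * r0 \<le> 2 * \<psi> u * u"
proof -
  have "(1/2) powr \<alpha> \<le> \<psi> u" using admissible_psi_ge_on_annulus assms by blast
  moreover from this have "0 \<le> \<psi> u" using powr_ge_zero[of "1/2::real" \<alpha>] by linarith
  ultimately have "(1/2) powr \<alpha> * (r0/2) \<le> \<psi> u * u"
    using assms(2,5) by (intro mult_mono) auto
  then show ?thesis by simp
qed

lemma has_real_derivative_at_within_open_subset:
  assumes "(f has_real_derivative f') (at t within I)" "t \<in> T" "open T" "T \<subseteq> I"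
  shows "(f has_real_derivative f') (at t)"
  using assms interior_maximal at_within_interior by (metis subsetD)

lemma hyperbolic_square_difference_derivative:
  fixes s1 s2 :: "real \<Rightarrow> real"
  assumes "(s1 has_real_derivative s1 t * h) (at t)" "(s2 has_real_derivative - s2 t * h) (at t)"
  shows "((\<lambda>t. (s1 t)\<^sup>2 - (s2 t)\<^sup>2) has_real_derivative 2 * h * ((s1 t)\<^sup>2 + (s2 t)\<^sup>2)) (at t)"
  using assms by (auto intro!: derivative_eq_intros simp: power2_eq_square algebra_simps)

lemma interval_length_le_if_derivative_ge:
  fixes f :: "real \<Rightarrow> real"
  assumes "a < b" "0 < k"
    and deriv: "\<And>t. t \<in> {a<..<b} \<Longrightarrow> \<exists>f'. (f has_real_derivative f') (at t) \<and> k \<le> f'"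
    and bound: "\<And>t. t \<in> {a<..<b} \<Longrightarrow> \<bar>f t\<bar> \<le> M"
  shows "k * (b - a) \<le> 2 * M"
proof -
  have growth: "k * (y - x) \<le> 2 * M" if "a < x" "x \<le> y" "y < b" for x y
  proof -
    have "f x - k * x \<le> f y - k * y"
    proof (rule DERIV_nonneg_imp_nondecreasing[OF \<open>x \<le> y\<close>])
      fix z assume "x \<le> z" "z \<le> y"
      then have "z \<in> {a<..<b}" using that by auto
      then obtain f' where "(f has_real_derivative f') (at z)" "k \<le> f'"
        using deriv by blast
      then show "\<exists>d. ((\<lambda>t. f t - k * t) has_real_derivative d) (at z) \<and> 0 \<le> d"
        by (auto intro!: derivative_eq_intros)
    qed
    then show ?thesis
      unfolding right_diff_distrib using bound[of x] bound[of y] that by fastforce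
  qed
  show ?thesis
  proof (rule field_le_epsilon)
    fix e :: real assume "0 < e"
    define \<delta> where "\<delta> = min (e / (2 * k)) ((b - a) / 4)"
    have "0 < \<delta>" using \<open>0 < e\<close> assms(1,2) by (simp add: \<delta>_def)
    have "\<delta> \<le> e / (2 * k)" "\<delta> \<le> (b - a) / 4" unfolding \<delta>_def by (rule min.cobounded1 min.cobounded2)+
    then have "2 * k * \<delta> \<le> e" using \<open>0 < k\<close> by (simp add: field_simps)
    have "k * ((b - \<delta>) - (a + \<delta>)) \<le> 2 * M"
      using \<open>0 < \<delta>\<close> \<open>\<delta> \<le> (b - a) / 4\<close> by (intro growth) auto
    then show "k * (b - a) \<le> 2 * M + e" using \<open>2 * k * \<delta> \<le> e\<close> by (simp add: algebra_simps)
  qed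
qed

lemma annulus_passage_time_le:
  assumes "0 \<le> \<alpha>" "0 < r0" "r0 < 1" "admissible_psi \<alpha> r0 \<psi>"
    and d1: "\<And>t. t \<in> {a<..<b} \<Longrightarrow>
      (s1 has_real_derivative s1 t * (\<psi> ((s1 t)\<^sup>2 + (s2 t)\<^sup>2) * ln lam)) (at t)"
    and d2: "\<And>t. t \<in> {a<..<b} \<Longrightarrow>
      (s2 has_real_derivative - s2 t * (\<psi> ((s1 t)\<^sup>2 + (s2 t)\<^sup>2) * ln lam)) (at t)"
    and annulus: "\<And>t. t \<in> {a<..<b} \<Longrightarrow> (s1 t, s2 t) \<in> D r0 - D (r0 / 2)"
  shows "(1/2) powr \<alpha> * ln lam * (b - a) \<le> 2"
proof (cases "a < b")
  case True
  let ?c = "(1/2) powr \<alpha> * ln lam"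
  have "?c * r0 * (b - a) \<le> 2 * r0"
  proof (rule interval_length_le_if_derivative_ge[OF True])
    fix t assume t: "t \<in> {a<..<b}"
    let ?u = "(s1 t)\<^sup>2 + (s2 t)\<^sup>2"
    have u: "r0/2 \<le> ?u" "?u \<le> r0" using annulus[OF t] unfolding D_def by auto
    then have "(1/2) powr \<alpha> * r0 * ln lam \<le> 2 * \<psi> ?u * ?u * ln lam"
      using admissible_psi_annulus_rate assms(1-4) ln_lam_pos by (intro mult_right_mono) auto
    then have "?c * r0 \<le> 2 * (\<psi> ?u * ln lam) * ?u" by (simp add: algebra_simps)
    with hyperbolic_square_difference_derivative[OF d1[OF t] d2[OF t]]
    show "\<exists>f'. ((\<lambda>t. (s1 t)\<^sup>2 - (s2 t)\<^sup>2) has_real_derivative f') (at t) \<and> ?c * r0 \<le> f'"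
      by blast
    show "\<bar>(s1 t)\<^sup>2 - (s2 t)\<^sup>2\<bar> \<le> r0"
      using u zero_le_power2[of "s1 t"] zero_le_power2[of "s2 t"] by linarith
  qed (use ln_lam_pos \<open>0 < r0\<close> in simp)
  then have "(?c * (b - a)) * r0 \<le> 2 * r0" by (simp add: algebra_simps)
  then show ?thesis using \<open>0 < r0\<close> by simp
next
  case False
  then have "(1/2) powr \<alpha> * ln lam * (b - a) \<le> 0"
    using ln_lam_pos by (intro mult_nonneg_nonpos) auto
  then show ?thesis by simp
qed

theorem lemma5p6:
  fixes \<alpha> :: real
  assumes "0 < \<alpha>" "\<alpha> < 1"
  shows "\<exists>T0>0. \<forall>r0 \<psi> (I::real set) (s1::real \<Rightarrow> real) s2.
    0 < r0 \<and> r0 < 1 \<and> admissible_psi \<alpha> r0 \<psi> \<and>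
    is_interval I \<and> 0 \<in> I \<and>
    (\<forall>t\<in>I. (s1 t, s2 t) \<in> D 1) \<and>
    (\<forall>t\<in>I. (s1 has_real_derivative
        s1 t * \<psi> ((s1 t)\<^sup>2 + (s2 t)\<^sup>2) * ln lam) (at t within I)) \<and>
    (\<forall>t\<in>I. (s2 has_real_derivative
        - s2 t * \<psi> ((s1 t)\<^sup>2 + (s2 t)\<^sup>2) * ln lam) (at t within I)) \<and>
    (s1 0, s2 0) \<in> D r0
    \<longrightarrow> (\<forall>a b. {a<..<b} \<subseteq> I \<and>
               (\<forall>t\<in>{a<..<b}. (s1 t, s2 t) \<in> D r0 - D (r0 / 2))
               \<longrightarrow> b - a < T0)"
proof -
  define c where "c = (1/2) powr \<alpha> * ln lam"
  have "0 < c" unfolding c_def using ln_lam_pos by simp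
  show ?thesis
  proof (intro exI[of _ "4 / c"] conjI allI impI)
    fix r0 \<psi> I s1 s2 a b
    assume H: "0 < r0 \<and> r0 < 1 \<and> admissible_psi \<alpha> r0 \<psi> \<and> is_interval I \<and> 0 \<in> I \<and>
      (\<forall>t\<in>I. (s1 t, s2 t) \<in> D 1) \<and>
      (\<forall>t\<in>I. (s1 has_real_derivative s1 t * \<psi> ((s1 t)\<^sup>2 + (s2 t)\<^sup>2) * ln lam) (at t within I)) \<and>
      (\<forall>t\<in>I. (s2 has_real_derivative - s2 t * \<psi> ((s1 t)\<^sup>2 + (s2 t)\<^sup>2) * ln lam) (at t within I)) \<and>
      (s1 0, s2 0) \<in> D r0"
      and stay: "{a<..<b} \<subseteq> I \<and> (\<forall>t\<in>{a<..<b}. (s1 t, s2 t) \<in> D r0 - D (r0 / 2))"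
    have "c * (b - a) \<le> 2" unfolding c_def
    proof (rule annulus_passage_time_le[of \<alpha> r0 \<psi>])
      fix t assume t: "t \<in> {a<..<b}"
      show "(s1 has_real_derivative s1 t * (\<psi> ((s1 t)\<^sup>2 + (s2 t)\<^sup>2) * ln lam)) (at t)"
        "(s2 has_real_derivative - s2 t * (\<psi> ((s1 t)\<^sup>2 + (s2 t)\<^sup>2) * ln lam)) (at t)"
        using H stay t by (auto simp: mult.assoc
            intro!: has_real_derivative_at_within_open_subset[where T = "{a<..<b}" and I = I])
    qed (use H stay \<open>0 < \<alpha>\<close> in auto)
    then show "b - a < 4 / c" using \<open>0 < c\<close> by (simp add: field_simps)
  qed (use \<open>0 < c\<close> in simp)
qed

end
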